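(* Suppose that $G$ is a finite group, $x\in G$ has prime order, and $\mathrm{Sub}_G(x)$ is a proper core-free subgroup of $G$. Then for every proper subgroup $H$ of $G$ with $\mathrm{Sub}_G(x)\le H$, $x$ is quasi-semiregular in the action of $G$ on the right cosets $[G:H]$.
   Context: For $x\in G$, the subnormaliser is $\mathrm{Sub}_G(x)=\langle g\in G : \langle x\rangle \text{ is subnormal in } \langle x,g\rangle\rangle$. A subgroup is core-free if it contains no nontrivial normal subgroup of $G$. A permutation $g$ is quasi-semiregular if $\langle g\rangle$ has a unique fixed point and acts semiregularly (only the identity fixes a point) on the remaining points. *)

theory Defs
  imports "HOL-Algebra.Algebra"
begin

inductive subnormal_in :: "('a, 'b) monoid_scheme \<Rightarrow> 'a set \<Rightarrow> 'a set \<Rightarrow> bool"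
  for G where
  sn_refl: "subgroup K G \<Longrightarrow> subnormal_in G K K"
| sn_step: "subnormal_in G A L \<Longrightarrow> subgroup K G \<Longrightarrow> L \<subseteq> K
      \<Longrightarrow> normal L (G\<lparr>carrier := K\<rparr>) \<Longrightarrow> subnormal_in G A K"

definition subnormaliser :: "('a, 'b) monoid_scheme \<Rightarrow> 'a \<Rightarrow> 'a set" where
  "subnormaliser G x =
     generate G {g \<in> carrier G. subnormal_in G (generate G {x}) (generate G {x, g})}"

definition core_free :: "('a, 'b) monoid_scheme \<Rightarrow> 'a set \<Rightarrow> bool" where
  "core_free G S \<longleftrightarrow> (\<forall>N. normal N G \<and> N \<subseteq> S \<longrightarrow> N = {\<one>\<^bsub>G\<^esub>})"

definition quasi_semiregular_on_cosets :: "('a, 'b) monoid_scheme \<Rightarrow> 'a set \<Rightarrow> 'a \<Rightarrow> bool" where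
  "quasi_semiregular_on_cosets G H x \<longleftrightarrow>
     (\<exists>!C. C \<in> rcosets\<^bsub>G\<^esub> H \<and> (\<forall>y \<in> generate G {x}. C #>\<^bsub>G\<^esub> y = C)) \<and>
     (\<forall>C \<in> rcosets\<^bsub>G\<^esub> H. \<not> (\<forall>y \<in> generate G {x}. C #>\<^bsub>G\<^esub> y = C) \<longrightarrow>
        (\<forall>y \<in> generate G {x}. C #>\<^bsub>G\<^esub> y = C \<longrightarrow>
           (\<forall>D \<in> rcosets\<^bsub>G\<^esub> H. D #>\<^bsub>G\<^esub> y = D)))"

end

theory Submission
  imports Defs
begin

text \<open>
  Let \<open>p\<close> be the order of \<open>x\<close> and \<open>Q = \<langle>x\<rangle>\<close>. Subgroups of finite \<open>p\<close>-groups are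
  subnormal, so every \<open>p\<close>-subgroup \<open>R\<close> containing \<open>x\<close> lies in \<open>Sub\<^sub>G(x)\<close>; applying the
  same fact to \<open>R \<inter> \<langle>x, n\<rangle>\<close>, which is normal in \<open>\<langle>x, n\<rangle>\<close> for \<open>n \<in> N\<^sub>G(R)\<close>, shows that
  \<open>N\<^sub>G(R)\<close> lies in \<open>Sub\<^sub>G(x)\<close> as well. Hence a subgroup \<open>H \<supseteq> Sub\<^sub>G(x)\<close> contains every
  Sylow \<open>p\<close>-subgroup through \<open>Q\<close> together with its normaliser, and a Frattini argument
  shows that \<open>Q \<le> H\<^sup>g\<close> forces \<open>g \<in> H\<close>: the coset \<open>H\<close> is the only coset fixed by \<open>Q\<close>.
  As \<open>Q\<close> has prime order, each nontrivial element of \<open>Q\<close> generates \<open>Q\<close> and so fixes no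
  other coset.
\<close>

text \<open>The ASCII multiset syntax \<open><#\<close> would clash with left cosets \<open>g <# A\<close>.\<close>
no_notation (ASCII) subset_mset (infix \<open><#\<close> 50)

lemma card_eq_prime_power_imp_finite:
  "Factorial_Ring.prime p \<Longrightarrow> card A = p ^ k \<Longrightarrow> finite A"
  by (rule card_ge_0_finite) (simp add: prime_gt_0_nat)

section \<open>Fixed points of actions of p-groups\<close>

lemma (in group_action) orbit_eq_singleton_iff:
  assumes "w \<in> E"
  shows "orbit G \<phi> w = {w} \<longleftrightarrow> (\<forall>g \<in> carrier G. \<phi> g w = w)"
  using orbit_refl[OF assms] unfolding orbit_def by auto

lemma (in group_action) prime_dvd_card_orbit:
  assumes p: "Factorial_Ring.prime p" and order: "order G = p ^ k"
    and w: "w \<in> E" and moved: "\<not> (\<forall>g \<in> carrier G. \<phi> g w = w)"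
  shows "p dvd card (orbit G \<phi> w)"
proof -
  have "card (orbit G \<phi> w) dvd p ^ k"
    using orbit_stabilizer_theorem[OF w] order by (metis dvd_triv_left)
  then obtain i where i: "card (orbit G \<phi> w) = p ^ i"
    using divides_primepow_nat[OF p] by blast
  have "i \<noteq> 0"
  proof
    assume "i = 0"
    then have "orbit G \<phi> w = {w}"
      using i orbit_refl[OF w] by (metis card_1_singletonE power_0 singletonD)
    with moved show False using orbit_eq_singleton_iff[OF w] by blast
  qed
  then show ?thesis using i by simp
qed

lemma (in group_action) card_fixed_points_mod_prime:
  assumes fin: "finite E" and p: "Factorial_Ring.prime p" and order: "order G = p ^ k"
  shows "card {w \<in> E. \<forall>g \<in> carrier G. \<phi> g w = w} mod p = card E mod p"
proof -
  define F where "F = {w \<in> E. \<forall>g \<in> carrier G. \<phi> g w = w}"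
  have orbit_mod: "card (Ob \<inter> F) mod p = card Ob mod p" if orb: "Ob \<in> orbits G E \<phi>" for Ob
  proof -
    obtain w where w: "w \<in> E" and Ob: "Ob = orbit G \<phi> w"
      using orb unfolding orbits_def by blast
    show ?thesis
    proof (cases "w \<in> F")
      case True
      then have "Ob = {w}" using orbit_eq_singleton_iff[OF w] unfolding Ob F_def by simp
      with True show ?thesis by simp
    next
      case False
      have "Ob \<inter> F = {}"
      proof (rule ccontr)
        assume "Ob \<inter> F \<noteq> {}"
        then obtain v where v: "v \<in> orbit G \<phi> w" "v \<in> E" "\<forall>g \<in> carrier G. \<phi> g v = v"
          unfolding Ob F_def by blast
        then have "w \<in> {v}" using orbit_sym[OF w] orbit_eq_singleton_iff by blast
        with v(2,3) False show False unfolding F_def by blast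
      qed
      moreover have "p dvd card Ob"
        using prime_dvd_card_orbit[OF p order w] False w unfolding Ob F_def by blast
      ultimately show ?thesis by simp
    qed
  qed
  have "card E = (\<Sum>Ob\<in>orbits G E \<phi>. card Ob)"
    using disjoint_sum[OF fin, of "\<lambda>_. 1::nat"] by simp
  moreover have "card F = (\<Sum>Ob\<in>orbits G E \<phi>. card (Ob \<inter> F))"
  proof -
    have "card F = (\<Sum>w\<in>E. of_bool (w \<in> F))"
      using fin by (simp add: F_def Int_def)
    also have "\<dots> = (\<Sum>Ob\<in>orbits G E \<phi>. \<Sum>w\<in>Ob. of_bool (w \<in> F))"
      by (rule disjoint_sum[OF fin, symmetric])
    also have "\<dots> = (\<Sum>Ob\<in>orbits G E \<phi>. card (Ob \<inter> F))"
    proof (rule sum.cong)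
      fix Ob assume "Ob \<in> orbits G E \<phi>"
      then have "finite Ob" using orbits_coverture fin by (metis Union_upper finite_subset)
      then show "(\<Sum>w\<in>Ob. of_bool (w \<in> F)) = card (Ob \<inter> F)" by (simp add: Int_def)
    qed simp
    finally show ?thesis .
  qed
  ultimately show ?thesis
    using orbit_mod by (metis (no_types, lifting) F_def mod_sum_eq sum.cong)
qed

context group
begin

lemma group_action_of_right_action:
  assumes closed: "\<And>w g. w \<in> E \<Longrightarrow> g \<in> carrier G \<Longrightarrow> f w g \<in> E"
    and one: "\<And>w. w \<in> E \<Longrightarrow> f w \<one> = w"
    and mult: "\<And>w g h. w \<in> E \<Longrightarrow> g \<in> carrier G \<Longrightarrow> h \<in> carrier G \<Longrightarrow> f w (g \<otimes> h) = f (f w g) h"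
  shows "group_action G E (\<lambda>g. \<lambda>w\<in>E. f w (inv g))"
proof -
  have cancel: "f (f w g) (inv g) = w" "f (f w (inv g)) g = w"
    if "w \<in> E" "g \<in> carrier G" for w g
    using that by (simp_all flip: mult add: one)
  have bij: "(\<lambda>w\<in>E. f w (inv g)) \<in> Bij E" if g: "g \<in> carrier G" for g
  proof -
    have "bij_betw (\<lambda>w\<in>E. f w (inv g)) E E"
      by (rule bij_betwI[where g = "\<lambda>w. f w g"]) (use g in \<open>auto simp: closed cancel\<close>)
    then show ?thesis unfolding Bij_def by auto
  qed
  have "(\<lambda>w\<in>E. f w (inv (g \<otimes> h))) = compose E (\<lambda>w\<in>E. f w (inv g)) (\<lambda>w\<in>E. f w (inv h))"
    if "g \<in> carrier G" "h \<in> carrier G" for g h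
    using that by (auto simp: compose_def inv_mult_group closed mult)
  then have "(\<lambda>g. \<lambda>w\<in>E. f w (inv g)) \<in> hom G (BijGroup E)"
    by (auto intro!: homI simp: BijGroup_def bij)
  then show ?thesis
    unfolding group_action_def group_hom_def group_hom_axioms_def
    by (simp add: group_BijGroup)
qed

lemma card_fixed_points_right_action_mod_prime:
  assumes "finite E" and "Factorial_Ring.prime p" and "order G = p ^ k"
    and "\<And>w g. w \<in> E \<Longrightarrow> g \<in> carrier G \<Longrightarrow> f w g \<in> E"
    and "\<And>w. w \<in> E \<Longrightarrow> f w \<one> = w"
    and "\<And>w g h. w \<in> E \<Longrightarrow> g \<in> carrier G \<Longrightarrow> h \<in> carrier G \<Longrightarrow> f w (g \<otimes> h) = f (f w g) h"
  shows "card {w \<in> E. \<forall>g \<in> carrier G. f w g = w} mod p = card E mod p"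
proof -
  interpret group_action G E "\<lambda>g. \<lambda>w\<in>E. f w (inv g)"
    by (rule group_action_of_right_action) fact+
  have "{w \<in> E. \<forall>g \<in> carrier G. (\<lambda>w\<in>E. f w (inv g)) w = w} = {w \<in> E. \<forall>g \<in> carrier G. f w g = w}"
    by (auto, metis inv_closed inv_inv)
  with card_fixed_points_mod_prime assms(1-3) show ?thesis by metis
qed

lemma card_rcosets_in_subgroup:
  assumes "subgroup P G" "subgroup K G" "P \<subseteq> K"
  shows "card ((\<lambda>g. P #> g) ` K) * card P = card K"
proof -
  interpret K: group "G\<lparr>carrier := K\<rparr>" by (rule subgroup_imp_group[OF assms(2)])
  have "rcosets\<^bsub>G\<lparr>carrier := K\<rparr>\<^esub> P = (\<lambda>g. P #> g) ` K"
    unfolding RCOSETS_def r_coset_def by auto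
  then show ?thesis
    using K.lagrange[OF subgroup_incl[OF assms]] by (simp add: order_def)
qed

lemma card_subgroup_dvd:
  assumes "subgroup P G" "subgroup K G" "P \<subseteq> K"
  shows "card P dvd card K"
  using card_rcosets_in_subgroup[OF assms] by (metis dvd_triv_right)

lemma card_subgroup_of_p_group:
  assumes "Factorial_Ring.prime p" "subgroup Q G" "card Q = p ^ k" "subgroup A G" "A \<subseteq> Q"
  obtains j where "card A = p ^ j"
  using card_subgroup_dvd[OF assms(4,2,5)] assms(3) divides_primepow_nat[OF assms(1)] that
  by auto

lemma prime_dvd_card_rcosets_of_p_group:
  assumes p: "Factorial_Ring.prime p" and Q: "subgroup Q G" "card Q = p ^ k"
    and A: "subgroup A G" "A \<subset> Q"
  shows "p dvd card ((\<lambda>g. A #> g) ` Q)"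
proof -
  have index: "card ((\<lambda>g. A #> g) ` Q) * card A = card Q"
    using card_rcosets_in_subgroup[OF A(1) Q(1)] A(2) by blast
  then have "card ((\<lambda>g. A #> g) ` Q) dvd p ^ k" using Q(2) by (metis dvd_triv_left)
  then obtain i where i: "card ((\<lambda>g. A #> g) ` Q) = p ^ i"
    using divides_primepow_nat[OF p] by blast
  have "i \<noteq> 0"
  proof
    assume "i = 0"
    then have "card A = card Q" using i index by simp
    with psubset_card_mono[OF card_eq_prime_power_imp_finite[OF p Q(2)] A(2)] show False by simp
  qed
  then show ?thesis using i by simp
qed

lemma card_fixed_rcosets_mod_prime:
  assumes P: "P \<subseteq> carrier G" and K: "subgroup K G" and Q: "subgroup Q G" "Q \<subseteq> K"
    and fin: "finite K" and p: "Factorial_Ring.prime p" and card_Q: "card Q = p ^ k"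
  shows "card {C \<in> (\<lambda>g. P #> g) ` K. \<forall>q \<in> Q. C #> q = C} mod p
           = card ((\<lambda>g. P #> g) ` K) mod p"
proof -
  interpret Q: group "G\<lparr>carrier := Q\<rparr>" by (rule subgroup_imp_group[OF Q(1)])
  have QG: "Q \<subseteq> carrier G" and KG: "K \<subseteq> carrier G" using Q(1) K subgroup.subset by auto
  have cosets_in_G: "C \<subseteq> carrier G" if "C \<in> (\<lambda>g. P #> g) ` K" for C
    using that P KG r_coset_subset_G by blast
  show ?thesis
  proof (rule Q.card_fixed_points_right_action_mod_prime[of _ p k, simplified])
    show "finite ((\<lambda>g. P #> g) ` K)" using fin by simp
    show "Factorial_Ring.prime p" by (rule p)
    show "order (G\<lparr>carrier := Q\<rparr>) = p ^ k" using card_Q by (simp add: order_def)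
    show "C #> q \<in> (\<lambda>g. P #> g) ` K" if C: "C \<in> (\<lambda>g. P #> g) ` K" and q: "q \<in> Q" for C q
    proof -
      obtain g where g: "g \<in> K" and C_eq: "C = P #> g" using C by blast
      have "C #> q = P #> (g \<otimes> q)"
        using coset_mult_assoc[OF P] g q KG QG C_eq by auto
      moreover have "g \<otimes> q \<in> K" using subgroup.m_closed[OF K] g q Q(2) by blast
      ultimately show ?thesis by blast
    qed
    show "C #> \<one> = C" if "C \<in> (\<lambda>g. P #> g) ` K" for C
      using cosets_in_G[OF that] by simp
    show "C #> (q \<otimes> q') = C #> q #> q'" if "C \<in> (\<lambda>g. P #> g) ` K" "q \<in> Q" "q' \<in> Q" for C q q'
      using coset_mult_assoc[OF cosets_in_G[OF that(1)]] that(2,3) QG by auto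
  qed
qed

lemma conjugate_eq_image: "g <# A #> inv g = (\<lambda>a. g \<otimes> a \<otimes> inv g) ` A"
  unfolding l_coset_def r_coset_def by auto

lemma mem_conjugate_iff:
  assumes "g \<in> carrier G" "A \<subseteq> carrier G" "y \<in> carrier G"
  shows "y \<in> g <# A #> inv g \<longleftrightarrow> inv g \<otimes> y \<otimes> g \<in> A"
proof
  assume "y \<in> g <# A #> inv g"
  then obtain a where a: "a \<in> A" and y: "y = g \<otimes> a \<otimes> inv g"
    unfolding conjugate_eq_image by blast
  have "a \<in> carrier G" using a assms(2) by blast
  then have "inv g \<otimes> y \<otimes> g = a"
    using assms(1) unfolding y by (simp add: m_assoc) (simp add: m_assoc [symmetric])
  with a show "inv g \<otimes> y \<otimes> g \<in> A" by simp
next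
  assume "inv g \<otimes> y \<otimes> g \<in> A"
  moreover have "y = g \<otimes> (inv g \<otimes> y \<otimes> g) \<otimes> inv g"
    using assms by (simp add: m_assoc) (simp add: m_assoc [symmetric])
  ultimately show "y \<in> g <# A #> inv g"
    unfolding conjugate_eq_image by blast
qed

lemma rcos_fixed_iff:
  assumes H: "subgroup H G" and g: "g \<in> carrier G" and z: "z \<in> carrier G"
  shows "H #> g #> z = H #> g \<longleftrightarrow> z \<in> inv g <# H #> g"
proof -
  have HG: "H \<subseteq> carrier G" using H subgroup.subset by blast
  have "H #> g #> z = H #> g \<longleftrightarrow> g \<otimes> z \<in> H #> g"
    using H g z by (metis coset_mult_assoc[OF HG] m_closed repr_independence repr_independenceD)
  also have "\<dots> \<longleftrightarrow> g \<otimes> z \<otimes> inv g \<in> H"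
    using subgroup.rcos_module[OF H is_group] g z by simp
  also have "\<dots> \<longleftrightarrow> z \<in> inv g <# H #> g"
    using mem_conjugate_iff[of "inv g" H z] g z HG by simp
  finally show ?thesis .
qed

lemma card_conjugate:
  assumes "g \<in> carrier G" "A \<subseteq> carrier G"
  shows "card (g <# A #> inv g) = card A"
proof -
  have "inj_on (\<lambda>a. g \<otimes> a \<otimes> inv g) A"
    using assms conjugation_is_inj by (intro inj_onI) blast
  then show ?thesis unfolding conjugate_eq_image by (rule card_image)
qed

lemma conjugate_mono: "A \<subseteq> B \<Longrightarrow> g <# A #> inv g \<subseteq> g <# B #> inv g"
  unfolding conjugate_eq_image by (rule image_mono)

lemma conjugate_conjugate:
  assumes "g \<in> carrier G" "h \<in> carrier G" "A \<subseteq> carrier G"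
  shows "g <# (h <# A #> inv h) #> inv g = (g \<otimes> h) <# A #> inv (g \<otimes> h)"
  unfolding conjugate_eq_image image_image
  using assms by (intro image_cong) (auto simp: m_assoc inv_mult_group)

lemma conjugate_Int:
  assumes "g \<in> carrier G" "A \<subseteq> carrier G" "B \<subseteq> carrier G"
  shows "g <# (A \<inter> B) #> inv g = (g <# A #> inv g) \<inter> (g <# B #> inv g)"
proof -
  have "inj_on (\<lambda>a. g \<otimes> a \<otimes> inv g) (carrier G)"
    using assms(1) conjugation_is_inj by (intro inj_onI) blast
  then show ?thesis unfolding conjugate_eq_image using assms(2,3) by (rule inj_on_image_Int)
qed

lemma conjugate_subset_subgroup:
  assumes "subgroup U G" "u \<in> U" "A \<subseteq> U"
  shows "u <# A #> inv u \<subseteq> U"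
  using assms unfolding conjugate_eq_image
  by (auto intro: subgroup.m_closed subgroup.m_inv_closed)

lemma mem_normalizer_iff:
  assumes "A \<subseteq> carrier G"
  shows "g \<in> normalizer G A \<longleftrightarrow> g \<in> carrier G \<and> g <# A #> inv g = A"
  using assms unfolding normalizer_def stabilizer_def by auto

lemma conjugate_subset_imp_mem_normalizer:
  assumes "finite A" "A \<subseteq> carrier G" "g \<in> carrier G" "g <# A #> inv g \<subseteq> A"
  shows "g \<in> normalizer G A"
  using assms card_subset_eq[OF assms(1,4)] card_conjugate mem_normalizer_iff by metis

lemma conjugate_subset_conjugate_imp_mem_normalizer:
  assumes "finite A" "A \<subseteq> carrier G" "h \<in> carrier G" "g \<in> carrier G"
    and "g <# A #> inv g \<subseteq> h <# A #> inv h"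
  shows "inv h \<otimes> g \<in> normalizer G A"
proof -
  have "(inv h \<otimes> g) <# A #> inv (inv h \<otimes> g) = inv h <# (g <# A #> inv g) #> inv (inv h)"
    using conjugate_conjugate[of "inv h" g A] assms(2-4) by simp
  also have "\<dots> \<subseteq> inv h <# (h <# A #> inv h) #> inv (inv h)"
    using assms(5) by (rule conjugate_mono)
  also have "\<dots> = A"
    using subgroup_conjugation_is_surj0[of "inv h" A] assms(2,3) by simp
  finally show ?thesis
    using conjugate_subset_imp_mem_normalizer[OF assms(1,2)] assms(3,4) by simp
qed

lemma subgroup_subset_normalizer:
  assumes "subgroup A G"
  shows "A \<subseteq> normalizer G A"
proof
  fix a assume a: "a \<in> A"
  have AG: "A \<subseteq> carrier G" and aG: "a \<in> carrier G" using assms a subgroup.subset by auto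
  have "a \<in> \<one> <# A" using lcos_mult_one[OF AG] a by simp
  then have "\<one> <# A = a <# A" by (rule l_repr_independence[OF _ one_closed assms])
  then have "a <# A = A" using lcos_mult_one[OF AG] by simp
  moreover have "A #> inv a = A"
    using subgroup.rcos_const[OF assms is_group subgroup.m_inv_closed[OF assms a]] .
  ultimately show "a \<in> normalizer G A" using mem_normalizer_iff[OF AG] aG by simp
qed

lemma normalizer_Int:
  assumes "A \<subseteq> carrier G" "B \<subseteq> carrier G"
  shows "normalizer G A \<inter> normalizer G B \<subseteq> normalizer G (A \<inter> B)"
proof
  fix g assume "g \<in> normalizer G A \<inter> normalizer G B"
  then have g: "g \<in> carrier G" "g <# A #> inv g = A" "g <# B #> inv g = B"
    using mem_normalizer_iff assms by auto
  have "A \<inter> B \<subseteq> carrier G" using assms by blast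
  with g show "g \<in> normalizer G (A \<inter> B)"
    using conjugate_Int[OF g(1) assms] mem_normalizer_iff by simp
qed

lemma fixed_rcos_imp_mem_normalizer:
  assumes A: "subgroup A G" "finite A" and q: "q \<in> carrier G"
    and fixed: "\<forall>a \<in> A. A #> q #> a = A #> q"
  shows "q \<in> normalizer G A"
proof -
  have AG: "A \<subseteq> carrier G" using A(1) subgroup.subset by blast
  have "A \<subseteq> inv q <# A #> q"
  proof
    fix a assume a: "a \<in> A"
    then have "a \<in> carrier G" using AG by blast
    from rcos_fixed_iff[OF A(1) q this] show "a \<in> inv q <# A #> q" using fixed a by simp
  qed
  then have "q <# A #> inv q \<subseteq> A"
    using conjugate_mono[of A "inv q <# A #> q" q] subgroup_conjugation_is_surj0[OF q AG] by simp
  then show ?thesis by (rule conjugate_subset_imp_mem_normalizer[OF A(2) AG q])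
qed

lemma normal_of_subset_normalizer:
  assumes A: "subgroup A G" and K: "subgroup K G" "A \<subseteq> K" "K \<subseteq> normalizer G A"
  shows "A \<lhd> G\<lparr>carrier := K\<rparr>"
proof -
  have N: "subgroup (normalizer G A) G"
    by (rule normalizer_imp_subgroup[OF subgroup.subset[OF A]])
  interpret N: group "G\<lparr>carrier := normalizer G A\<rparr>" by (rule subgroup_imp_group[OF N])
  have "subgroup K (G\<lparr>carrier := normalizer G A\<rparr>)" by (rule subgroup_incl[OF K(1) N K(3)])
  from N.normal_restrict_supergroup[OF this subgroup_in_normalizer[OF A] K(2)] show ?thesis
    by simp
qed

end

section \<open>Sylow subgroups\<close>

definition sylow_subgroup :: "('a, 'b) monoid_scheme \<Rightarrow> nat \<Rightarrow> 'a set \<Rightarrow> bool" where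
  "sylow_subgroup G p P \<longleftrightarrow> subgroup P G \<and> card P = p ^ multiplicity p (order G)"

context group
begin

lemma sylow_subgroup_conjugate:
  assumes "sylow_subgroup G p P" "g \<in> carrier G"
  shows "sylow_subgroup G p (g <# P #> inv g)"
proof -
  have "subgroup P G" "card P = p ^ multiplicity p (order G)"
    using assms(1) unfolding sylow_subgroup_def by auto
  then show ?thesis
    using assms(2) subgroup.subset[of P G]
    by (simp add: sylow_subgroup_def subgroup_conjugation_is_surj2 card_conjugate)
qed

lemma order_multiplicity_decompose:
  assumes "finite (carrier G)" "Factorial_Ring.prime p"
  obtains m where "order G = p ^ multiplicity p (order G) * m" "\<not> p dvd m"
proof -
  have "order G \<noteq> 0" using assms(1) order_gt_0_iff_finite by simp
  moreover have "\<not> is_unit p" using assms(2) not_prime_unit by blast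
  ultimately show ?thesis using multiplicity_decompose' that by metis
qed

lemma card_rcosets_sylow_not_dvd:
  assumes fin: "finite (carrier G)" and p: "Factorial_Ring.prime p"
    and P: "sylow_subgroup G p P" and K: "subgroup K G" "P \<subseteq> K"
  shows "\<not> p dvd card ((\<lambda>g. P #> g) ` K)"
proof
  assume p_dvd: "p dvd card ((\<lambda>g. P #> g) ` K)"
  define a where "a = multiplicity p (order G)"
  obtain m where order: "order G = p ^ a * m" and m: "\<not> p dvd m"
    using order_multiplicity_decompose[OF fin p] unfolding a_def by blast
  have "card ((\<lambda>g. P #> g) ` K) * p ^ a = card K"
    using card_rcosets_in_subgroup[OF _ K] P unfolding sylow_subgroup_def a_def by auto
  moreover have "card K dvd p ^ a * m"
    using card_subgroup_dvd[OF K(1) subgroup_self] subgroup.subset[OF K(1)] order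
    by (simp add: order_def)
  ultimately have "card ((\<lambda>g. P #> g) ` K) * p ^ a dvd m * p ^ a"
    by (metis mult.commute)
  then have "card ((\<lambda>g. P #> g) ` K) dvd m"
    using p prime_gt_0_nat by simp
  with p_dvd m show False using dvd_trans by blast
qed

text \<open>Sylow's conjugacy theorem inside a subgroup \<open>K\<close>: as \<open>|K : P|\<close> is prime to \<open>p\<close>,
  the \<open>p\<close>-group \<open>Q\<close> fixes some coset \<open>P g\<close>, i.e. \<open>Q \<le> P\<^sup>g\<close>.\<close>

lemma sylow_conjugate_supset:
  assumes fin: "finite (carrier G)" and p: "Factorial_Ring.prime p"
    and P: "sylow_subgroup G p P" and K: "subgroup K G" "P \<subseteq> K"
    and Q: "subgroup Q G" "Q \<subseteq> K" "card Q = p ^ k"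
  shows "\<exists>g \<in> K. Q \<subseteq> g <# P #> inv g"
proof -
  have P_sub: "subgroup P G" using P unfolding sylow_subgroup_def by blast
  have KG: "K \<subseteq> carrier G" using K(1) subgroup.subset by blast
  have "finite K" using fin KG finite_subset by blast
  then have "card {C \<in> (\<lambda>g. P #> g) ` K. \<forall>q \<in> Q. C #> q = C} mod p
      = card ((\<lambda>g. P #> g) ` K) mod p"
    by (rule card_fixed_rcosets_mod_prime[OF subgroup.subset[OF P_sub] K(1) Q(1,2) _ p Q(3)])
  then have "card {C \<in> (\<lambda>g. P #> g) ` K. \<forall>q \<in> Q. C #> q = C} mod p \<noteq> 0"
    using card_rcosets_sylow_not_dvd[OF fin p P K] by (metis dvd_eq_mod_eq_0)
  then have "{C \<in> (\<lambda>g. P #> g) ` K. \<forall>q \<in> Q. C #> q = C} \<noteq> {}"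
    by (metis card.empty mod_0)
  then obtain g where g: "g \<in> K" and fixed: "\<forall>q \<in> Q. P #> g #> q = P #> g"
    by blast
  have gG: "g \<in> carrier G" using g KG by blast
  have "Q \<subseteq> inv g <# P #> g"
  proof
    fix q assume q: "q \<in> Q"
    then have "q \<in> carrier G" using Q(2) KG by blast
    from rcos_fixed_iff[OF P_sub gG this] show "q \<in> inv g <# P #> g" using fixed q by simp
  qed
  then have "Q \<subseteq> inv g <# P #> inv (inv g)" using gG by simp
  moreover have "inv g \<in> K" by (rule subgroup.m_inv_closed[OF K(1) g])
  ultimately show ?thesis by (rule bexI)
qed

lemma sylow_subgroup_between:
  assumes fin: "finite (carrier G)" and p: "Factorial_Ring.prime p"
    and U: "subgroup U G" and P: "sylow_subgroup G p P" "P \<subseteq> U"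
    and Q: "subgroup Q G" "Q \<subseteq> U" "card Q = p ^ k"
  shows "\<exists>R. sylow_subgroup G p R \<and> Q \<subseteq> R \<and> R \<subseteq> U"
proof -
  obtain u where u: "u \<in> U" and "Q \<subseteq> u <# P #> inv u"
    using sylow_conjugate_supset[OF fin p P(1) U P(2) Q] by blast
  moreover have "u \<in> carrier G" using u U subgroup.subset by blast
  ultimately show ?thesis
    using sylow_subgroup_conjugate[OF P(1)] conjugate_subset_subgroup[OF U u P(2)] by blast
qed

lemma sylow_subgroup_supset:
  assumes fin: "finite (carrier G)" and p: "Factorial_Ring.prime p"
    and Q: "subgroup Q G" "card Q = p ^ k"
  shows "\<exists>P. sylow_subgroup G p P \<and> Q \<subseteq> P"
proof -
  obtain m where "order G = p ^ multiplicity p (order G) * m"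
    using order_multiplicity_decompose[OF fin p] by blast
  from sylow_thm[OF p is_group this fin] obtain P where P: "sylow_subgroup G p P"
    unfolding sylow_subgroup_def by blast
  have "P \<subseteq> carrier G" "Q \<subseteq> carrier G"
    using P Q(1) subgroup.subset unfolding sylow_subgroup_def by auto
  then show ?thesis
    using sylow_subgroup_between[OF fin p subgroup_self P _ Q(1) _ Q(2)] by blast
qed

end

section \<open>Subnormality in p-groups\<close>

lemma subnormal_in_trans:
  assumes "subnormal_in G B C" and "subnormal_in G A B"
  shows "subnormal_in G A C"
  using assms by (induction rule: subnormal_in.induct) (auto intro: subnormal_in.sn_step)

context group
begin

text \<open>\<open>A\<close> acting on the cosets of \<open>A\<close> in \<open>Q\<close> has \<open>p\<close> dividing its number of fixed points,
  one of which is \<open>A\<close>; any other one is \<open>A q\<close> with \<open>q \<in> N\<^sub>G(A) - A\<close>.\<close>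

lemma normalizer_p_subgroup_psupset:
  assumes p: "Factorial_Ring.prime p" and Q: "subgroup Q G" "card Q = p ^ k"
    and A: "subgroup A G" "A \<subset> Q"
  shows "A \<subset> normalizer G A \<inter> Q"
proof -
  define \<Omega> where "\<Omega> = (\<lambda>g. A #> g) ` Q"
  define F where "F = {C \<in> \<Omega>. \<forall>a \<in> A. C #> a = C}"
  have finQ: "finite Q" by (rule card_eq_prime_power_imp_finite[OF p Q(2)])
  have AG: "A \<subseteq> carrier G" and QG: "Q \<subseteq> carrier G" using A(1) Q(1) subgroup.subset by auto
  obtain j where card_A: "card A = p ^ j"
    using card_subgroup_of_p_group[OF p Q A(1)] A(2) by blast
  have "card F mod p = card \<Omega> mod p"
    unfolding F_def \<Omega>_def
    by (rule card_fixed_rcosets_mod_prime[OF AG Q(1) A(1) _ finQ p card_A]) (use A(2) in blast)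
  then have "p dvd card F"
    using prime_dvd_card_rcosets_of_p_group[OF p Q A] unfolding \<Omega>_def
    by (simp add: dvd_eq_mod_eq_0)
  moreover have "A \<in> F"
  proof -
    have "A = A #> \<one>" using AG by simp
    then have "A \<in> \<Omega>" unfolding \<Omega>_def using subgroup.one_closed[OF Q(1)] by blast
    moreover have "A #> a = A" if "a \<in> A" for a
      by (rule subgroup.rcos_const[OF A(1) is_group that])
    ultimately show ?thesis unfolding F_def by blast
  qed
  moreover have "finite F" unfolding F_def \<Omega>_def using finQ by simp
  ultimately have "p \<le> card F" by (metis card_gt_0_iff dvd_imp_le empty_iff)
  then have "\<exists>C \<in> F. C \<noteq> A"
    using card_mono[of "{A}" F] prime_ge_2_nat[OF p] \<open>finite F\<close> by fastforce
  then obtain q where q: "q \<in> Q" and fixed: "\<forall>a \<in> A. A #> q #> a = A #> q"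
    and moved: "A #> q \<noteq> A"
    unfolding F_def \<Omega>_def by auto
  have "q \<notin> A" using moved subgroup.rcos_const[OF A(1) is_group] by auto
  moreover have "q \<in> normalizer G A"
    using fixed_rcos_imp_mem_normalizer[OF A(1) finite_subset[OF _ finQ] _ fixed] A(2) q QG
    by blast
  ultimately show ?thesis using subgroup_subset_normalizer[OF A(1)] A(2) q by blast
qed

lemma subnormal_in_p_group:
  assumes p: "Factorial_Ring.prime p" and Q: "subgroup Q G" "card Q = p ^ k"
  shows "subgroup A G \<Longrightarrow> A \<subseteq> Q \<Longrightarrow> subnormal_in G A Q"
proof (induction "card Q - card A" arbitrary: A rule: less_induct)
  case less
  note A = less.prems
  show ?case
  proof (cases "A = Q")
    case True
    then show ?thesis using subnormal_in.sn_refl[OF Q(1)] by simp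
  next
    case False
    define N where "N = normalizer G A \<inter> Q"
    have "A \<subset> N"
      unfolding N_def using normalizer_p_subgroup_psupset[OF p Q A(1)] A(2) False by blast
    have N: "subgroup N G" "N \<subseteq> normalizer G A" "N \<subseteq> Q"
      unfolding N_def using subgroup_Int normalizer_imp_subgroup subgroup.subset[OF A(1)] Q(1)
      by auto
    have "finite Q" by (rule card_eq_prime_power_imp_finite[OF p Q(2)])
    then have "card A < card N" "card N \<le> card Q"
      using psubset_card_mono[OF _ \<open>A \<subset> N\<close>] card_mono[OF _ N(3)] finite_subset[OF N(3)]
      by auto
    then have "subnormal_in G N Q" using less.hyps N(1,3) by simp
    moreover have "subnormal_in G A N"
      using \<open>A \<subset> N\<close> normal_of_subset_normalizer[OF A(1) N(1) _ N(2)]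
      by (auto intro: subnormal_in.sn_step[OF subnormal_in.sn_refl[OF A(1)] N(1)])
    ultimately show ?thesis by (rule subnormal_in_trans)
  qed
qed

section \<open>The subnormaliser\<close>

lemma mem_subnormaliserI:
  "g \<in> carrier G \<Longrightarrow> subnormal_in G (generate G {x}) (generate G {x, g}) \<Longrightarrow> g \<in> subnormaliser G x"
  unfolding subnormaliser_def by (rule generate.incl) blast

lemma p_subgroup_subset_subnormaliser:
  assumes p: "Factorial_Ring.prime p" and R: "subgroup R G" "card R = p ^ k" "x \<in> R"
  shows "R \<subseteq> subnormaliser G x"
proof
  fix r assume r: "r \<in> R"
  have "x \<in> carrier G" "r \<in> carrier G" using R(1,3) r subgroup.subset by auto
  then have K: "subgroup (generate G {x, r}) G" and X: "subgroup (generate G {x}) G"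
    by (auto intro: generate_is_subgroup)
  have "generate G {x, r} \<subseteq> R" using generate_subgroup_incl[OF _ R(1)] R(3) r by simp
  then obtain j where "card (generate G {x, r}) = p ^ j"
    using card_subgroup_of_p_group[OF p R(1,2) K] by blast
  moreover have "generate G {x} \<subseteq> generate G {x, r}" by (rule mono_generate) blast
  ultimately have "subnormal_in G (generate G {x}) (generate G {x, r})"
    using subnormal_in_p_group[OF p K] X by blast
  with \<open>r \<in> carrier G\<close> show "r \<in> subnormaliser G x" by (rule mem_subnormaliserI)
qed

lemma normalizer_p_subgroup_subset_subnormaliser:
  assumes p: "Factorial_Ring.prime p" and P: "subgroup P G" "card P = p ^ k" "x \<in> P"
  shows "normalizer G P \<subseteq> subnormaliser G x"
proof
  fix n assume n: "n \<in> normalizer G P"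
  define K where "K = generate G {x, n}"
  have PG: "P \<subseteq> carrier G" using P(1) subgroup.subset by blast
  have nG: "n \<in> carrier G" using n mem_normalizer_iff[OF PG] by blast
  have xG: "x \<in> carrier G" using P(3) PG by blast
  have K: "subgroup K G" unfolding K_def using xG nG by (auto intro: generate_is_subgroup)
  have X: "subgroup (generate G {x}) G" using xG by (auto intro: generate_is_subgroup)
  have "x \<in> normalizer G P" using subgroup_subset_normalizer[OF P(1)] P(3) by blast
  then have "K \<subseteq> normalizer G P"
    unfolding K_def using generate_subgroup_incl[OF _ normalizer_imp_subgroup[OF PG]] n by simp
  then have K_N: "K \<subseteq> normalizer G (P \<inter> K)"
    using subgroup_subset_normalizer[OF K] normalizer_Int[OF PG subgroup.subset[OF K]] by blast
  have PK: "subgroup (P \<inter> K) G" by (rule subgroup_Int[OF P(1) K])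
  then obtain j where "card (P \<inter> K) = p ^ j"
    using card_subgroup_of_p_group[OF p P(1,2)] by blast
  moreover have "generate G {x} \<subseteq> P \<inter> K"
    unfolding K_def using generate_subgroup_incl[OF _ P(1)] P(3) mono_generate[of "{x}" "{x, n}"]
    by auto
  ultimately have "subnormal_in G (generate G {x}) (P \<inter> K)"
    using subnormal_in_p_group[OF p PK] X by blast
  moreover have "P \<inter> K \<lhd> G\<lparr>carrier := K\<rparr>"
    using normal_of_subset_normalizer[OF PK K _ K_N] by blast
  ultimately have "subnormal_in G (generate G {x}) K"
    using subnormal_in.sn_step[OF _ K] by blast
  with nG show "n \<in> subnormaliser G x" unfolding K_def by (rule mem_subnormaliserI)
qed

section \<open>Fixed cosets\<close>

text \<open>The Frattini argument: \<open>Q\<close> lies in a Sylow subgroup \<open>R \<le> H \<inter> H\<^sup>g\<close>; then \<open>R\<close> and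
  \<open>R\<^sup>g\<inverse>\<close> are Sylow subgroups of \<open>H\<close>, conjugate by some \<open>h \<in> H\<close>, and \<open>h\<inverse> g \<in> N\<^sub>G(R) \<le> H\<close>.\<close>

lemma mem_of_p_subgroup_subset_conjugate:
  assumes fin: "finite (carrier G)" and p: "Factorial_Ring.prime p"
    and Q: "subgroup Q G" "card Q = p ^ e"
    and H: "subgroup H G"
    and sylow_in_H: "\<And>R. sylow_subgroup G p R \<Longrightarrow> Q \<subseteq> R \<Longrightarrow> R \<subseteq> H \<and> normalizer G R \<subseteq> H"
    and g: "g \<in> carrier G" and Q_conj: "Q \<subseteq> inv g <# H #> g"
  shows "g \<in> H"
proof -
  have HG: "H \<subseteq> carrier G" using H subgroup.subset by blast
  define U where "U = inv g <# H #> g"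
  have U: "subgroup U G" unfolding U_def by (rule subgroup_conjugation_is_surj1[OF g H])
  obtain R0 where R0: "sylow_subgroup G p R0" "Q \<subseteq> R0"
    using sylow_subgroup_supset[OF fin p Q] by blast
  have "sylow_subgroup G p (inv g <# R0 #> g)"
    using sylow_subgroup_conjugate[OF R0(1), of "inv g"] g by simp
  moreover have "inv g <# R0 #> g \<subseteq> U"
    unfolding U_def using conjugate_mono[of R0 H "inv g"] sylow_in_H[OF R0] g by simp
  ultimately obtain R where R: "sylow_subgroup G p R" "Q \<subseteq> R" "R \<subseteq> U"
    using sylow_subgroup_between[OF fin p U _ _ Q(1) _ Q(2)] Q_conj unfolding U_def by blast
  have RG: "R \<subseteq> carrier G" using R(1) subgroup.subset unfolding sylow_subgroup_def by blast
  have "finite R"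
    using R(1) card_eq_prime_power_imp_finite[OF p] unfolding sylow_subgroup_def by blast
  have "g <# R #> inv g \<subseteq> H"
    using conjugate_mono[OF R(3), of g] subgroup_conjugation_is_surj0[OF g HG]
    unfolding U_def by simp
  moreover have "R \<subseteq> H" and N_R: "normalizer G R \<subseteq> H" using sylow_in_H[OF R(1,2)] by auto
  moreover have "subgroup (g <# R #> inv g) G"
    and "card (g <# R #> inv g) = p ^ multiplicity p (order G)"
    using sylow_subgroup_conjugate[OF R(1) g] unfolding sylow_subgroup_def by auto
  ultimately obtain h where h: "h \<in> H" and conj_R: "g <# R #> inv g \<subseteq> h <# R #> inv h"
    using sylow_conjugate_supset[OF fin p R(1) H] by blast
  have hG: "h \<in> carrier G" using h HG by blast
  have "inv h \<otimes> g \<in> H"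
    using conjugate_subset_conjugate_imp_mem_normalizer[OF \<open>finite R\<close> RG hG g conj_R] N_R by blast
  then have "h \<otimes> (inv h \<otimes> g) \<in> H" by (rule subgroup.m_closed[OF H h])
  then show "g \<in> H" using hG g by (simp add: m_assoc [symmetric])
qed

lemma generate_eq_of_prime_ord:
  assumes x: "x \<in> carrier G" and p: "Factorial_Ring.prime (ord x)"
    and y: "y \<in> generate G {x}" "y \<noteq> \<one>"
  shows "generate G {y} = generate G {x}"
proof -
  have Q: "subgroup (generate G {x}) G" using x by (auto intro: generate_is_subgroup)
  have yG: "y \<in> carrier G" using y(1) Q subgroup.subset by blast
  have Y: "subgroup (generate G {y}) G" using yG by (auto intro: generate_is_subgroup)
  have YQ: "generate G {y} \<subseteq> generate G {x}" using generate_subgroup_incl[OF _ Q] y(1) by simp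
  have "ord y dvd ord x"
    using card_subgroup_dvd[OF Y Q YQ] generate_pow_card[OF x] generate_pow_card[OF yG] by simp
  moreover have "ord y \<noteq> 1" using ord_eq_1[OF yG] y(2) by simp
  ultimately have "card (generate G {y}) = card (generate G {x})"
    using p generate_pow_card[OF x] generate_pow_card[OF yG] prime_nat_iff by metis
  moreover have "finite (generate G {x})"
    using card_eq_prime_power_imp_finite[OF p, of "generate G {x}" 1] generate_pow_card[OF x]
    by simp
  ultimately show ?thesis using card_subset_eq YQ by blast
qed

lemma generate_subset_conjugate_of_prime_ord:
  assumes H: "subgroup H G" and g: "g \<in> carrier G"
    and x: "x \<in> carrier G" and p: "Factorial_Ring.prime (ord x)"
    and y: "y \<in> generate G {x}" "y \<noteq> \<one>" "H #> g #> y = H #> g"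
  shows "generate G {x} \<subseteq> inv g <# H #> g"
proof -
  have "y \<in> carrier G" using y(1) generate_is_subgroup[of "{x}"] x subgroup.subset by blast
  then have "y \<in> inv g <# H #> g" using rcos_fixed_iff[OF H g] y(3) by blast
  then have "generate G {y} \<subseteq> inv g <# H #> g"
    using generate_subgroup_incl[OF _ subgroup_conjugation_is_surj1[OF g H]] by simp
  then show ?thesis using generate_eq_of_prime_ord[OF x p y(1,2)] by simp
qed

lemma quasi_semiregular_on_cosetsI:
  assumes H: "subgroup H G" and x: "x \<in> H" and p: "Factorial_Ring.prime (ord x)"
    and self_conj: "\<And>g. g \<in> carrier G \<Longrightarrow> generate G {x} \<subseteq> inv g <# H #> g \<Longrightarrow> g \<in> H"
  shows "quasi_semiregular_on_cosets G H x"
proof -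
  define Q where "Q = generate G {x}"
  have HG: "H \<subseteq> carrier G" using H subgroup.subset by blast
  have xG: "x \<in> carrier G" using x HG by blast
  have Q: "subgroup Q G" unfolding Q_def using xG by (auto intro: generate_is_subgroup)
  have QG: "Q \<subseteq> carrier G" using Q subgroup.subset by blast
  have QH: "Q \<subseteq> H" unfolding Q_def using generate_subgroup_incl[OF _ H] x by simp
  have fixed_iff: "(\<forall>y \<in> Q. H #> g #> y = H #> g) \<longleftrightarrow> Q \<subseteq> inv g <# H #> g"
    if "g \<in> carrier G" for g
    using rcos_fixed_iff[OF H that] QG by blast
  have unique: "\<exists>!C. C \<in> rcosets H \<and> (\<forall>y \<in> Q. C #> y = C)"
  proof
    have "H = H #> \<one>" using HG by simp
    then have "H \<in> rcosets H" using rcosetsI[OF HG one_closed] by simp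
    moreover have "\<forall>y \<in> Q. H #> y = H" using QH subgroup.rcos_const[OF H is_group] by blast
    ultimately show "H \<in> rcosets H \<and> (\<forall>y \<in> Q. H #> y = H)" ..
  next
    fix C assume C: "C \<in> rcosets H \<and> (\<forall>y \<in> Q. C #> y = C)"
    then obtain g where g: "g \<in> carrier G" and C_eq: "C = H #> g" unfolding RCOSETS_def by blast
    then have "g \<in> H" using C self_conj fixed_iff unfolding Q_def by blast
    then show "C = H" using C_eq subgroup.rcos_const[OF H is_group] by simp
  qed
  have trivial: "y = \<one>"
    if C: "C \<in> rcosets H" "\<not> (\<forall>y \<in> Q. C #> y = C)" and y: "y \<in> Q" "C #> y = C" for C y
  proof (rule ccontr)
    assume "y \<noteq> \<one>"
    obtain g where g: "g \<in> carrier G" and C_eq: "C = H #> g"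
      using C(1) unfolding RCOSETS_def by blast
    have "Q \<subseteq> inv g <# H #> g"
      using generate_subset_conjugate_of_prime_ord[OF H g xG p] y \<open>y \<noteq> \<one>\<close> C_eq
      unfolding Q_def by blast
    then show False using C(2) fixed_iff[OF g] C_eq by blast
  qed
  show ?thesis
    unfolding quasi_semiregular_on_cosets_def Q_def[symmetric]
  proof (intro conjI unique ballI impI)
    fix C y D assume C: "C \<in> rcosets H" "\<not> (\<forall>y \<in> Q. C #> y = C)"
      and y: "y \<in> Q" "C #> y = C" and D: "D \<in> rcosets H"
    obtain g where "g \<in> carrier G" "D = H #> g" using D unfolding RCOSETS_def by blast
    then have "D \<subseteq> carrier G" using r_coset_subset_G[OF HG] by simp
    then show "D #> y = D" using trivial[OF C y] by simp
  qed
qed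

end

theorem corollary3p4:
  fixes G (structure) and x :: 'a
  assumes "group G" and "finite (carrier G)" and "x \<in> carrier G"
    and "Factorial_Ring.prime (group.ord G x)"
    and "subnormaliser G x \<noteq> carrier G"
    and "core_free G (subnormaliser G x)"
  shows "\<forall>H. subgroup H G \<and> H \<noteq> carrier G \<and> subnormaliser G x \<subseteq> H
           \<longrightarrow> quasi_semiregular_on_cosets G H x"
proof (intro allI impI)
  interpret group G by fact
  fix H assume "subgroup H G \<and> H \<noteq> carrier G \<and> subnormaliser G x \<subseteq> H"
  then have H: "subgroup H G" and sub_H: "subnormaliser G x \<subseteq> H" by auto
  define p where "p = ord x"
  note fin = \<open>finite (carrier G)\<close> and x = \<open>x \<in> carrier G\<close>
  have p: "Factorial_Ring.prime p" unfolding p_def by fact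
  have Q: "subgroup (generate G {x}) G" "card (generate G {x}) = p ^ 1"
    using generate_is_subgroup x generate_pow_card[OF x] unfolding p_def by auto
  have in_H: "R \<subseteq> H \<and> normalizer G R \<subseteq> H" if "subgroup R G" "card R = p ^ k" "x \<in> R" for R k
    using p_subgroup_subset_subnormaliser[OF p that]
      normalizer_p_subgroup_subset_subnormaliser[OF p that] sub_H by blast
  show "quasi_semiregular_on_cosets G H x"
  proof (rule quasi_semiregular_on_cosetsI[OF H])
    show "x \<in> H" using in_H[OF Q] generate.incl[of x "{x}" G] by blast
    show "Factorial_Ring.prime (ord x)" by fact
    fix g assume "g \<in> carrier G" "generate G {x} \<subseteq> inv g <# H #> g"
    then show "g \<in> H"
      using mem_of_p_subgroup_subset_conjugate[OF fin p Q H] in_H generate.incl[of x "{x}" G]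
      unfolding sylow_subgroup_def by blast
  qed
qed

end
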